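(* Let $\Gamma$ be a first-order expansion of $(\mathbb{Z};\mathrm{suc})$. If $\Gamma$ primitive positively defines a relation that is not Horn-definable over $(\mathbb{Z};\mathrm{suc})$, then $\Gamma$ also primitive positively defines a binary relation that is not Horn-definable over $(\mathbb{Z};\mathrm{suc})$.
   Context: $\mathrm{suc}^p=\{(x,y)\in\mathbb{Z}^2:y=x+p\}$ for $p\in\mathbb{Z}$, $\mathrm{suc}=\mathrm{suc}^1$. A first-order expansion of $(\mathbb{Z};\mathrm{suc})$ is a relational structure with domain $\mathbb{Z}$ whose relations are first-order definable in $(\mathbb{Z};\mathrm{suc})$ and in which $\mathrm{suc}$ is primitive positive definable. A relation is Horn-definable over $(\mathbb{Z};\mathrm{suc})$ if it is defined in $(\mathbb{Z};\mathrm{suc})$ by a quantifier-free formula in conjunctive normal form whose literals are of the form $\mathrm{suc}^p(x,y)$ or $\neg\mathrm{suc}^p(x,y)$ and in which each clause contains at most one positive (unnegated) literal. *)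

theory Defs
  imports Main
begin

definition asg :: "int list \<Rightarrow> nat \<Rightarrow> int" where
  "asg xs i = (if i < length xs then xs ! i else 0)"

definition suc_pow :: "int \<Rightarrow> (int \<times> int) set" where
  "suc_pow p = {(x, y). y = x + p}"

definition suc_rel :: "int list set" where
  "suc_rel = {xs. length xs = 2 \<and> (xs ! 0, xs ! 1) \<in> suc_pow 1}"

datatype fo = FSuc nat nat | FEq nat nat | FNot fo | FAnd fo fo | FEx nat fo

fun fo_sat :: "fo \<Rightarrow> (nat \<Rightarrow> int) \<Rightarrow> bool" where
  "fo_sat (FSuc x y) s = ((s x, s y) \<in> suc_pow 1)"
| "fo_sat (FEq x y) s = (s x = s y)"
| "fo_sat (FNot \<phi>) s = (\<not> fo_sat \<phi> s)"
| "fo_sat (FAnd \<phi> \<psi>) s = (fo_sat \<phi> s \<and> fo_sat \<psi> s)"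
| "fo_sat (FEx v \<phi>) s = (\<exists>a. fo_sat \<phi> (s(v := a)))"

fun fo_fv :: "fo \<Rightarrow> nat set" where
  "fo_fv (FSuc x y) = {x, y}"
| "fo_fv (FEq x y) = {x, y}"
| "fo_fv (FNot \<phi>) = fo_fv \<phi>"
| "fo_fv (FAnd \<phi> \<psi>) = fo_fv \<phi> \<union> fo_fv \<psi>"
| "fo_fv (FEx v \<phi>) = fo_fv \<phi> - {v}"

definition fo_definable :: "nat \<Rightarrow> int list set \<Rightarrow> bool" where
  "fo_definable n R \<longleftrightarrow> (\<exists>\<phi>. fo_fv \<phi> \<subseteq> {..<n} \<and>
      R = {xs. length xs = n \<and> fo_sat \<phi> (asg xs)})"

text \<open>A structure with domain Z is given by its set of relations, each tagged with its arity.\<close>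
type_synonym zstructure = "(nat \<times> int list set) set"

datatype pp = PRel nat "int list set" "nat list" | PEq nat nat | PAnd pp pp | PEx nat pp

fun pp_sat :: "pp \<Rightarrow> (nat \<Rightarrow> int) \<Rightarrow> bool" where
  "pp_sat (PRel k R vs) s = (map s vs \<in> R)"
| "pp_sat (PEq x y) s = (s x = s y)"
| "pp_sat (PAnd \<phi> \<psi>) s = (pp_sat \<phi> s \<and> pp_sat \<psi> s)"
| "pp_sat (PEx v \<phi>) s = (\<exists>a. pp_sat \<phi> (s(v := a)))"

fun pp_fv :: "pp \<Rightarrow> nat set" where
  "pp_fv (PRel k R vs) = set vs"
| "pp_fv (PEq x y) = {x, y}"
| "pp_fv (PAnd \<phi> \<psi>) = pp_fv \<phi> \<union> pp_fv \<psi>"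
| "pp_fv (PEx v \<phi>) = pp_fv \<phi> - {v}"

fun pp_wf :: "zstructure \<Rightarrow> pp \<Rightarrow> bool" where
  "pp_wf \<Gamma> (PRel k R vs) = ((k, R) \<in> \<Gamma> \<and> length vs = k)"
| "pp_wf \<Gamma> (PEq x y) = True"
| "pp_wf \<Gamma> (PAnd \<phi> \<psi>) = (pp_wf \<Gamma> \<phi> \<and> pp_wf \<Gamma> \<psi>)"
| "pp_wf \<Gamma> (PEx v \<phi>) = pp_wf \<Gamma> \<phi>"

definition pp_definable :: "zstructure \<Rightarrow> nat \<Rightarrow> int list set \<Rightarrow> bool" where
  "pp_definable \<Gamma> n R \<longleftrightarrow> (\<exists>\<phi>. pp_wf \<Gamma> \<phi> \<and> pp_fv \<phi> \<subseteq> {..<n} \<and>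
      R = {xs. length xs = n \<and> pp_sat \<phi> (asg xs)})"

definition fo_expansion :: "zstructure \<Rightarrow> bool" where
  "fo_expansion \<Gamma> \<longleftrightarrow> (\<forall>(k, R) \<in> \<Gamma>. fo_definable k R) \<and> pp_definable \<Gamma> 2 suc_rel"

text \<open>A literal (b, p, x, y) stands for suc^p(x,y) if b, and for its negation otherwise.
  A CNF is a list of clauses, each clause a list of literals (empty clause = false).\<close>
type_synonym literal = "bool \<times> int \<times> nat \<times> nat"

definition lit_sat :: "literal \<Rightarrow> (nat \<Rightarrow> int) \<Rightarrow> bool" where
  "lit_sat l s = (case l of (b, p, x, y) \<Rightarrow> (((s x, s y) \<in> suc_pow p) = b))"

definition horn_clause :: "literal list \<Rightarrow> bool" where
  "horn_clause c \<longleftrightarrow> length (filter (\<lambda>l. fst l) c) \<le> 1"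

definition horn_definable :: "nat \<Rightarrow> int list set \<Rightarrow> bool" where
  "horn_definable n R \<longleftrightarrow> (\<exists>cls :: literal list list.
      (\<forall>c \<in> set cls. horn_clause c \<and>
         (\<forall>(b, p, x, y) \<in> set c. x < n \<and> y < n)) \<and>
      R = {xs. length xs = n \<and> (\<forall>c \<in> set cls. \<exists>l \<in> set c. lit_sat l (asg xs))})"

end

theory Submission
  imports Defs
begin

text \<open>A relation first-order definable in (Z; suc) is local: whether a tuple belongs to it depends
  only on which pairwise differences of its entries are small, and what they are. Locality passes to
  everything pp-definable from such relations. A local relation R is Horn-definable iff it is
  line-closed, i.e. for a, b \<in> R the points a + K(b - a) lie in R for all large K.

  Take a non-Horn pp-definable R of minimal arity n, so some line a + K(b - a) leaves R for
  arbitrarily large K. Fixing one difference x_q - x_p = c in R and projecting out x_q gives a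
  pp-definable relation of arity n - 1, which is Horn by minimality; hence the line stays in R
  whenever a and b share a difference, and all entries of b - a are distinct. For n \<ge> 3 the
  projections of R then produce members of R with exactly one small difference, on any prescribed
  coordinate; gluing two such members along a shared difference yields a line of R whose far points
  have no small difference at all, while such tuples are not in R. So n = 2 (n \<le> 1 is
  impossible by locality).\<close>

definition remove_nth :: "nat \<Rightarrow> 'a list \<Rightarrow> 'a list" where
  "remove_nth k xs = take k xs @ drop (Suc k) xs"

definition insert_nth :: "nat \<Rightarrow> 'a \<Rightarrow> 'a list \<Rightarrow> 'a list" where
  "insert_nth k w ys = take k ys @ w # drop k ys"

lemma length_remove_nth [simp]: "k < length xs \<Longrightarrow> length (remove_nth k xs) = length xs - 1"
  by (simp add: remove_nth_def)

lemma nth_remove_nth: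
  "k < length xs \<Longrightarrow> i < length xs - 1 \<Longrightarrow> remove_nth k xs ! i = xs ! (if i < k then i else Suc i)"
  by (auto simp add: remove_nth_def nth_append)

lemma nth_eq_if_remove_nth_eq:
  assumes "length xs = length ys" "k < length xs" "remove_nth k xs = remove_nth k ys"
    and "i < length xs" "i \<noteq> k"
  shows "xs ! i = ys ! i"
proof (cases "i < k")
  case True
  then show ?thesis
    using assms nth_remove_nth[of k xs i] nth_remove_nth[of k ys i] by simp
next
  case False
  then obtain j where "i = Suc j" "k \<le> j" using assms(5) by (cases i) auto
  then show ?thesis
    using assms nth_remove_nth[of k xs j] nth_remove_nth[of k ys j] by simp
qed

lemma remove_nth_inject:
  assumes "length xs = length ys" "k < length xs" "remove_nth k xs = remove_nth k ys"
    and "xs ! k = ys ! k"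
  shows "xs = ys"
  using nth_eq_if_remove_nth_eq[OF assms(1-3)] assms by (metis nth_equalityI)

lemma length_insert_nth: "length (insert_nth k w ys) = Suc (length ys)"
  by (simp add: insert_nth_def)

lemma remove_nth_insert_nth: "k \<le> length ys \<Longrightarrow> remove_nth k (insert_nth k w ys) = ys"
  by (simp add: insert_nth_def remove_nth_def)

lemma nth_insert_nth: "k \<le> length ys \<Longrightarrow> insert_nth k w ys ! k = w"
  by (simp add: insert_nth_def nth_append)

definition abs_sum :: "int list \<Rightarrow> int" where
  "abs_sum a = sum_list (map abs a)"

lemma abs_nth_le_abs_sum: "i < length a \<Longrightarrow> \<bar>a ! i\<bar> \<le> abs_sum a"
  unfolding abs_sum_def by (rule member_le_sum_list) auto

lemma abs_sum_nonneg: "0 \<le> abs_sum a"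
  unfolding abs_sum_def by (rule sum_list_nonneg) auto

lemma abs_diff_le_abs_sum: "i < length a \<Longrightarrow> j < length a \<Longrightarrow> \<bar>a ! j - a ! i\<bar> \<le> 2 * abs_sum a"
  using abs_nth_le_abs_sum[of i a] abs_nth_le_abs_sum[of j a] by linarith

section \<open>Lines through two tuples\<close>

definition line_point :: "int list \<Rightarrow> int list \<Rightarrow> int \<Rightarrow> int list" where
  "line_point a b K = map (\<lambda>i. a ! i + K * (b ! i - a ! i)) [0..<length a]"

lemma length_line_point [simp]: "length (line_point a b K) = length a"
  by (simp add: line_point_def)

lemma nth_line_point [simp]: "i < length a \<Longrightarrow> line_point a b K ! i = a ! i + K * (b ! i - a ! i)"
  by (simp add: line_point_def)

lemma remove_nth_line_point:
  assumes "length a = length b" "k < length a"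
  shows "remove_nth k (line_point a b K) = line_point (remove_nth k a) (remove_nth k b) K"
  using assms by (intro nth_equalityI) (simp_all add: nth_remove_nth)

lemma line_point_diff:
  assumes "i < length a" "j < length a"
  shows "line_point a b K ! j - line_point a b K ! i
    = (a ! j - a ! i) + K * ((b ! j - a ! j) - (b ! i - a ! i))"
  using assms by (simp add: algebra_simps)

lemma line_point_diff_far:
  assumes "length a = length b" "i < length a" "j < length a"
    and "b ! i - a ! i \<noteq> b ! j - a ! j" "0 \<le> K"
  shows "K - 2 * abs_sum a \<le> \<bar>line_point a b K ! j - line_point a b K ! i\<bar>"
proof -
  define D where "D = (b ! j - a ! j) - (b ! i - a ! i)"
  have "K * 1 \<le> K * \<bar>D\<bar>"
    using assms(4,5) by (intro mult_left_mono) (auto simp: D_def)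
  then have "K \<le> \<bar>K * D\<bar>" using assms(5) by (simp add: abs_mult)
  moreover have "\<bar>a ! j - a ! i\<bar> \<le> 2 * abs_sum a" using abs_diff_le_abs_sum assms(2,3) by blast
  ultimately show ?thesis using line_point_diff[OF assms(2,3), of b K] unfolding D_def by linarith
qed

lemma line_point_diff_eq_iff:
  assumes "length a = length b" "i < length a" "j < length a" "\<bar>p\<bar> \<le> B"
    and "B + 2 * abs_sum a + 1 \<le> K"
  shows "line_point a b K ! j - line_point a b K ! i = p \<longleftrightarrow> a ! j - a ! i = p \<and> b ! j - b ! i = p"
proof (cases "b ! i - a ! i = b ! j - a ! j")
  case True
  then show ?thesis using line_point_diff[OF assms(2,3), of b K] by auto
next
  case False
  have "0 \<le> K" using assms(4,5) abs_sum_nonneg[of a] by linarith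
  then have "B < \<bar>line_point a b K ! j - line_point a b K ! i\<bar>"
    using line_point_diff_far[OF assms(1-3) False \<open>0 \<le> K\<close>] assms(5) by linarith
  moreover have "\<not> (a ! j - a ! i = p \<and> b ! j - b ! i = p)" using False by auto
  ultimately show ?thesis using assms(4) by auto
qed

section \<open>Locality of first-order definable relations\<close>

definition diff_equiv :: "int \<Rightarrow> nat set \<Rightarrow> (nat \<Rightarrow> int) \<Rightarrow> (nat \<Rightarrow> int) \<Rightarrow> bool" where
  "diff_equiv B V s t \<longleftrightarrow> (\<forall>x\<in>V. \<forall>y\<in>V.
     s y - s x = t y - t x \<or> (B < \<bar>s y - s x\<bar> \<and> B < \<bar>t y - t x\<bar>))"

definition diff_invariant :: "int \<Rightarrow> nat set \<Rightarrow> ((nat \<Rightarrow> int) \<Rightarrow> bool) \<Rightarrow> bool" where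
  "diff_invariant B V P \<longleftrightarrow> (\<forall>s t. diff_equiv B V s t \<longrightarrow> P s = P t)"

lemma diff_equiv_sym: "diff_equiv B V s t \<Longrightarrow> diff_equiv B V t s"
  unfolding diff_equiv_def by fastforce

lemma diff_equiv_mono: "diff_equiv B' V' s t \<Longrightarrow> B \<le> B' \<Longrightarrow> V \<subseteq> V' \<Longrightarrow> diff_equiv B V s t"
  unfolding diff_equiv_def by (smt (verit) subsetD)

lemma diff_invariant_mono:
  "diff_invariant B V P \<Longrightarrow> B \<le> B' \<Longrightarrow> V \<subseteq> V' \<Longrightarrow> diff_invariant B' V' P"
  unfolding diff_invariant_def using diff_equiv_mono by blast

lemma diff_invariant_conj:
  assumes "diff_invariant B1 V1 P" "diff_invariant B2 V2 Q"
  shows "diff_invariant (max B1 B2) (V1 \<union> V2) (\<lambda>s. P s \<and> Q s)"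
proof -
  have "diff_invariant (max B1 B2) (V1 \<union> V2) P" "diff_invariant (max B1 B2) (V1 \<union> V2) Q"
    using assms by (auto intro: diff_invariant_mono)
  then show ?thesis unfolding diff_invariant_def by blast
qed

text \<open>The back-and-forth step: a value for a new variable can be matched up to the threshold B
  on the other side, provided the old variables are matched up to 2B.\<close>

lemma diff_equiv_extend:
  assumes "finite U" "diff_equiv (2 * B) U s t"
  obtains b where "\<forall>y\<in>U. a - s y = b - t y \<or> (B < \<bar>a - s y\<bar> \<and> B < \<bar>b - t y\<bar>)"
proof (cases "\<exists>x\<in>U. \<bar>a - s x\<bar> \<le> B")
  case True
  then obtain x where x: "x \<in> U" "\<bar>a - s x\<bar> \<le> B" by blast
  have "a - s y = t x + (a - s x) - t y \<or> (B < \<bar>a - s y\<bar> \<and> B < \<bar>t x + (a - s x) - t y\<bar>)"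
    if "y \<in> U" for y
  proof -
    have "s y - s x = t y - t x \<or> (2 * B < \<bar>s y - s x\<bar> \<and> 2 * B < \<bar>t y - t x\<bar>)"
      using assms(2) x(1) that unfolding diff_equiv_def by blast
    then show ?thesis using x(2) by linarith
  qed
  then show ?thesis using that by blast
next
  case False
  define b where "b = B + 1 + (\<Sum>x\<in>U. \<bar>t x\<bar>)"
  have "B < \<bar>b - t y\<bar>" if "y \<in> U" for y
  proof -
    have "\<bar>t y\<bar> \<le> (\<Sum>x\<in>U. \<bar>t x\<bar>)" using assms(1) that by (intro member_le_sum) auto
    then show ?thesis unfolding b_def by linarith
  qed
  then show ?thesis using False that[of b] by force
qed

lemma diff_equiv_fun_upd:
  assumes "diff_equiv (2 * B) (V - {v}) s t" "0 \<le> B"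
    and b: "\<forall>y\<in>V - {v}. a - s y = b - t y \<or> (B < \<bar>a - s y\<bar> \<and> B < \<bar>b - t y\<bar>)"
  shows "diff_equiv B V (s(v := a)) (t(v := b))"
  unfolding diff_equiv_def
proof (intro ballI)
  fix x y assume x: "x \<in> V" and y: "y \<in> V"
  show "(s(v := a)) y - (s(v := a)) x = (t(v := b)) y - (t(v := b)) x \<or>
        (B < \<bar>(s(v := a)) y - (s(v := a)) x\<bar> \<and> B < \<bar>(t(v := b)) y - (t(v := b)) x\<bar>)"
  proof (cases "x = v"; cases "y = v")
    assume "x = v" "y \<noteq> v"
    then have "a - s y = b - t y \<or> (B < \<bar>a - s y\<bar> \<and> B < \<bar>b - t y\<bar>)" using b y by blast
    then show ?thesis using \<open>x = v\<close> \<open>y \<noteq> v\<close> by (auto simp: abs_minus_commute)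
  next
    assume "x \<noteq> v" "y = v"
    then have "a - s x = b - t x \<or> (B < \<bar>a - s x\<bar> \<and> B < \<bar>b - t x\<bar>)" using b x by blast
    then show ?thesis using \<open>x \<noteq> v\<close> \<open>y = v\<close> by auto
  next
    assume "x \<noteq> v" "y \<noteq> v"
    then have "s y - s x = t y - t x \<or> (2 * B < \<bar>s y - s x\<bar> \<and> 2 * B < \<bar>t y - t x\<bar>)"
      using assms(1) x y unfolding diff_equiv_def by blast
    then show ?thesis using \<open>x \<noteq> v\<close> \<open>y \<noteq> v\<close> assms(2) by auto
  qed simp
qed

lemma diff_invariant_exists:
  assumes "finite V" "0 \<le> B" "diff_invariant B V P"
  shows "diff_invariant (2 * B) (V - {v}) (\<lambda>s. \<exists>a. P (s(v := a)))"
proof -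
  have step: "\<exists>b. P (t(v := b))" if st: "diff_equiv (2 * B) (V - {v}) s t" and "P (s(v := a))" for s t a
  proof -
    obtain b where "\<forall>y\<in>V - {v}. a - s y = b - t y \<or> (B < \<bar>a - s y\<bar> \<and> B < \<bar>b - t y\<bar>)"
      using diff_equiv_extend[OF finite_Diff[OF assms(1)] st] by blast
    then have "diff_equiv B V (s(v := a)) (t(v := b))"
      using diff_equiv_fun_upd st assms(2) by blast
    then show ?thesis using assms(3) \<open>P (s(v := a))\<close> unfolding diff_invariant_def by blast
  qed
  show ?thesis
    unfolding diff_invariant_def using step diff_equiv_sym by blast
qed

lemma finite_fo_fv: "finite (fo_fv \<phi>)"
  by (induction \<phi>) auto

lemma finite_pp_fv: "finite (pp_fv \<phi>)"
  by (induction \<phi>) auto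

lemma fo_sat_diff_invariant: "\<exists>B\<ge>0. diff_invariant B (fo_fv \<phi>) (fo_sat \<phi>)"
proof (induction \<phi>)
  case (FSuc x y)
  have "diff_invariant 1 (fo_fv (FSuc x y)) (fo_sat (FSuc x y))"
    unfolding diff_invariant_def diff_equiv_def by (auto simp: suc_pow_def)
  then show ?case using zero_le_one by blast
next
  case (FEq x y)
  have "diff_invariant 0 (fo_fv (FEq x y)) (fo_sat (FEq x y))"
    unfolding diff_invariant_def diff_equiv_def by auto
  then show ?case by blast
next
  case (FNot \<phi>)
  then show ?case unfolding diff_invariant_def by auto
next
  case (FAnd \<phi> \<psi>)
  then obtain B1 B2 where "B1 \<ge> 0" "diff_invariant B1 (fo_fv \<phi>) (fo_sat \<phi>)"
    "diff_invariant B2 (fo_fv \<psi>) (fo_sat \<psi>)" by blast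
  then show ?case using diff_invariant_conj[of B1 _ _ B2]
    by (intro exI[of _ "max B1 B2"]) (simp add: fun_eq_iff)
next
  case (FEx v \<phi>)
  then obtain B where "B \<ge> 0" "diff_invariant B (fo_fv \<phi>) (fo_sat \<phi>)" by blast
  then show ?case using diff_invariant_exists[OF finite_fo_fv]
    by (intro exI[of _ "2 * B"]) (simp add: fun_eq_iff)
qed

definition tuple_equiv :: "int \<Rightarrow> int list \<Rightarrow> int list \<Rightarrow> bool" where
  "tuple_equiv B xs ys \<longleftrightarrow> length xs = length ys \<and> (\<forall>i<length xs. \<forall>j<length xs.
     xs ! j - xs ! i = ys ! j - ys ! i \<or> (B < \<bar>xs ! j - xs ! i\<bar> \<and> B < \<bar>ys ! j - ys ! i\<bar>))"

definition diff_local :: "nat \<Rightarrow> int list set \<Rightarrow> bool" where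
  "diff_local n R \<longleftrightarrow> (\<forall>xs\<in>R. length xs = n) \<and>
     (\<exists>B\<ge>0. \<forall>xs ys. xs \<in> R \<longrightarrow> tuple_equiv B xs ys \<longrightarrow> ys \<in> R)"

lemma tuple_equiv_sym: "tuple_equiv B xs ys \<Longrightarrow> tuple_equiv B ys xs"
  unfolding tuple_equiv_def by fastforce

lemma diff_local_of_diff_invariant:
  assumes "diff_invariant B V P" "0 \<le> B" "V \<subseteq> {..<n}"
  shows "diff_local n {xs. length xs = n \<and> P (asg xs)}"
  unfolding diff_local_def
proof (intro conjI exI[of _ B] allI impI)
  fix xs ys assume xs: "xs \<in> {xs. length xs = n \<and> P (asg xs)}" and eq: "tuple_equiv B xs ys"
  have "diff_equiv B V (asg xs) (asg ys)"
    using assms(3) xs eq unfolding diff_equiv_def tuple_equiv_def asg_def by auto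
  then show "ys \<in> {xs. length xs = n \<and> P (asg xs)}"
    using assms(1) xs eq unfolding diff_invariant_def tuple_equiv_def by auto
qed (use assms in auto)

lemma fo_definable_diff_local: "fo_definable n R \<Longrightarrow> diff_local n R"
  unfolding fo_definable_def using fo_sat_diff_invariant diff_local_of_diff_invariant by metis

lemma pp_sat_diff_invariant:
  assumes "\<forall>(k, R)\<in>\<Gamma>. diff_local k R"
  shows "pp_wf \<Gamma> \<phi> \<Longrightarrow> \<exists>B\<ge>0. diff_invariant B (pp_fv \<phi>) (pp_sat \<phi>)"
proof (induction \<phi>)
  case (PRel k R vs)
  then obtain B where B: "B \<ge> 0" "\<forall>xs ys. xs \<in> R \<longrightarrow> tuple_equiv B xs ys \<longrightarrow> ys \<in> R"
    using assms unfolding diff_local_def by fastforce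
  have "diff_invariant B (set vs) (\<lambda>s. map s vs \<in> R)"
    unfolding diff_invariant_def
  proof (intro allI impI)
    fix s t assume "diff_equiv B (set vs) s t"
    then have "tuple_equiv B (map s vs) (map t vs)" unfolding tuple_equiv_def diff_equiv_def by auto
    then show "(map s vs \<in> R) = (map t vs \<in> R)" using B tuple_equiv_sym by blast
  qed
  then show ?case using B by (intro exI[of _ B]) (simp add: fun_eq_iff)
next
  case (PEq x y)
  have "diff_invariant 0 (pp_fv (PEq x y)) (pp_sat (PEq x y))"
    unfolding diff_invariant_def diff_equiv_def by auto
  then show ?case by blast
next
  case (PAnd \<phi> \<psi>)
  then obtain B1 B2 where "B1 \<ge> 0" "diff_invariant B1 (pp_fv \<phi>) (pp_sat \<phi>)"
    "diff_invariant B2 (pp_fv \<psi>) (pp_sat \<psi>)" by auto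
  then show ?case using diff_invariant_conj[of B1 _ _ B2]
    by (intro exI[of _ "max B1 B2"]) (simp add: fun_eq_iff)
next
  case (PEx v \<phi>)
  then obtain B where "B \<ge> 0" "diff_invariant B (pp_fv \<phi>) (pp_sat \<phi>)" by auto
  then show ?case using diff_invariant_exists[OF finite_pp_fv]
    by (intro exI[of _ "2 * B"]) (simp add: fun_eq_iff)
qed

lemma pp_definable_diff_local:
  assumes "fo_expansion \<Gamma>" "pp_definable \<Gamma> n R"
  shows "diff_local n R"
proof -
  have "\<forall>(k, R)\<in>\<Gamma>. diff_local k R"
    using assms(1) fo_definable_diff_local unfolding fo_expansion_def by auto
  then show ?thesis
    using assms(2) pp_sat_diff_invariant diff_local_of_diff_invariant
    unfolding pp_definable_def by metis
qed

section \<open>Closure properties of pp-definability\<close>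

fun pp_rename :: "(nat \<Rightarrow> nat) \<Rightarrow> pp \<Rightarrow> pp" where
  "pp_rename f (PRel k R vs) = PRel k R (map f vs)"
| "pp_rename f (PEq x y) = PEq (f x) (f y)"
| "pp_rename f (PAnd \<phi> \<psi>) = PAnd (pp_rename f \<phi>) (pp_rename f \<psi>)"
| "pp_rename f (PEx v \<phi>) = PEx (f v) (pp_rename f \<phi>)"

lemma pp_sat_rename: "inj f \<Longrightarrow> pp_sat (pp_rename f \<phi>) s = pp_sat \<phi> (s \<circ> f)"
proof (induction \<phi> arbitrary: s)
  case (PEx v \<phi>)
  have upd: "(s(f v := a)) \<circ> f = (s \<circ> f)(v := a)" for a
    using PEx.prems by (auto simp: fun_eq_iff inj_eq)
  have "pp_sat (pp_rename f (PEx v \<phi>)) s = (\<exists>a. pp_sat (pp_rename f \<phi>) (s(f v := a)))" by simp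
  also have "\<dots> = (\<exists>a. pp_sat \<phi> ((s \<circ> f)(v := a)))" by (simp only: PEx upd)
  finally show ?case by (simp only: pp_sat.simps)
qed auto

lemma pp_wf_rename [simp]: "pp_wf \<Gamma> (pp_rename f \<phi>) = pp_wf \<Gamma> \<phi>"
  by (induction \<phi>) auto

lemma pp_fv_rename: "inj f \<Longrightarrow> pp_fv (pp_rename f \<phi>) = f ` pp_fv \<phi>"
  by (induction \<phi>) (auto simp: image_set_diff)

lemma pp_sat_cong: "(\<forall>x\<in>pp_fv \<phi>. s x = t x) \<Longrightarrow> pp_sat \<phi> s = pp_sat \<phi> t"
proof (induction \<phi> arbitrary: s t)
  case (PRel k R vs)
  then have "map s vs = map t vs" by simp
  then show ?case by (simp only: pp_sat.simps)
next
  case (PAnd \<phi>1 \<phi>2)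
  then show ?case by (metis UnCI pp_fv.simps(3) pp_sat.simps(3))
next
  case (PEx v \<phi>)
  then have "pp_sat \<phi> (s(v := a)) = pp_sat \<phi> (t(v := a))" for a by auto
  then show ?case by simp
qed auto

lemma pp_definable_length: "pp_definable \<Gamma> n R \<Longrightarrow> xs \<in> R \<Longrightarrow> length xs = n"
  unfolding pp_definable_def by auto

definition pp_defines :: "zstructure \<Rightarrow> nat set \<Rightarrow> ((nat \<Rightarrow> int) \<Rightarrow> bool) \<Rightarrow> bool" where
  "pp_defines \<Gamma> V P \<longleftrightarrow> (\<exists>\<phi>. pp_wf \<Gamma> \<phi> \<and> pp_fv \<phi> \<subseteq> V \<and> (\<forall>s. pp_sat \<phi> s = P s))"

lemma pp_defines_suc_01:
  assumes "fo_expansion \<Gamma>"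
  shows "pp_defines \<Gamma> {0, 1} (\<lambda>s. s 1 = s 0 + 1)"
proof -
  obtain \<phi> where \<phi>: "pp_wf \<Gamma> \<phi>" "pp_fv \<phi> \<subseteq> {..<2}"
    "suc_rel = {xs. length xs = 2 \<and> pp_sat \<phi> (asg xs)}"
    using assms unfolding fo_expansion_def pp_definable_def by blast
  have "pp_sat \<phi> s = (s 1 = s 0 + 1)" for s
  proof -
    have "\<forall>x\<in>pp_fv \<phi>. s x = asg [s 0, s 1] x"
    proof
      fix x assume "x \<in> pp_fv \<phi>"
      then consider "x = 0" | "x = 1" using \<phi>(2) by fastforce
      then show "s x = asg [s 0, s 1] x" by cases (simp_all add: asg_def)
    qed
    then have "pp_sat \<phi> s = pp_sat \<phi> (asg [s 0, s 1])" by (rule pp_sat_cong)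
    also have "\<dots> = ([s 0, s 1] \<in> suc_rel)" by (subst \<phi>(3)) simp
    also have "\<dots> = (s 1 = s 0 + 1)" by (simp add: suc_rel_def suc_pow_def)
    finally show ?thesis .
  qed
  moreover have "pp_fv \<phi> \<subseteq> {0, 1}" using \<phi>(2) by auto
  ultimately show ?thesis unfolding pp_defines_def using \<phi>(1) by blast
qed

lemma pp_defines_suc:
  assumes "fo_expansion \<Gamma>"
  shows "pp_defines \<Gamma> {x, y} (\<lambda>s. s y = s x + 1)"
proof -
  obtain \<phi> where \<phi>: "pp_wf \<Gamma> \<phi>" "pp_fv \<phi> \<subseteq> {0, 1}" "\<And>s. pp_sat \<phi> s = (s 1 = s 0 + 1)"
    using pp_defines_suc_01[OF assms] unfolding pp_defines_def by blast
  define N where "N = Suc (x + y)"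
  have inj: "inj (\<lambda>i. i + N)" by (simp add: inj_def)
  define \<psi> where
    "\<psi> = PEx N (PEx (Suc N) (PAnd (PEq N x) (PAnd (PEq (Suc N) y) (pp_rename (\<lambda>i. i + N) \<phi>))))"
  have "x \<noteq> N" "x \<noteq> Suc N" "y \<noteq> N" "y \<noteq> Suc N" by (auto simp: N_def)
  then have "pp_sat \<psi> s = (s y = s x + 1)" for s
    unfolding \<psi>_def by (auto simp: pp_sat_rename[OF inj] \<phi>(3))
  moreover have "pp_fv \<psi> \<subseteq> {x, y}" using \<phi>(2) by (auto simp: \<psi>_def pp_fv_rename[OF inj])
  moreover have "pp_wf \<Gamma> \<psi>" using \<phi>(1) by (simp add: \<psi>_def)
  ultimately show ?thesis unfolding pp_defines_def by blast
qed

lemma pp_defines_offset_nat: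
  assumes "fo_expansion \<Gamma>"
  shows "pp_defines \<Gamma> {x, y} (\<lambda>s. s y = s x + int m)"
proof (induction m arbitrary: x y)
  case 0
  have "pp_sat (PEq x y) s = (s y = s x + int 0)" for s by auto
  then show ?case unfolding pp_defines_def by (intro exI[of _ "PEq x y"]) auto
next
  case (Suc m)
  define z where "z = Suc (x + y)"
  obtain \<phi> where \<phi>: "pp_wf \<Gamma> \<phi>" "pp_fv \<phi> \<subseteq> {x, z}" "\<And>s. pp_sat \<phi> s = (s z = s x + int m)"
    using Suc.IH[of x z] unfolding pp_defines_def by blast
  obtain \<psi> where \<psi>: "pp_wf \<Gamma> \<psi>" "pp_fv \<psi> \<subseteq> {z, y}" "\<And>s. pp_sat \<psi> s = (s y = s z + 1)"
    using pp_defines_suc[OF assms, of z y] unfolding pp_defines_def by blast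
  have "x \<noteq> z" "y \<noteq> z" by (auto simp: z_def)
  then have "pp_sat (PEx z (PAnd \<phi> \<psi>)) s = (s y = s x + int (Suc m))" for s
    by (auto simp: \<phi>(3) \<psi>(3))
  moreover have "pp_fv (PEx z (PAnd \<phi> \<psi>)) \<subseteq> {x, y}" using \<phi>(2) \<psi>(2) by auto
  ultimately show ?case unfolding pp_defines_def using \<phi>(1) \<psi>(1)
    by (intro exI[of _ "PEx z (PAnd \<phi> \<psi>)"]) auto
qed

lemma pp_defines_offset:
  assumes "fo_expansion \<Gamma>"
  shows "pp_defines \<Gamma> {x, y} (\<lambda>s. s y = s x + c)"
proof (cases "0 \<le> c")
  case True
  then show ?thesis using pp_defines_offset_nat[OF assms, of x y "nat c"] by simp
next
  case False
  have "pp_defines \<Gamma> {y, x} (\<lambda>s. s x = s y + int (nat (- c)))" by (rule pp_defines_offset_nat[OF assms])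
  moreover have "(\<lambda>s. s x = s y + int (nat (- c))) = (\<lambda>s. s y = s x + c)"
    using False by (auto simp: fun_eq_iff)
  ultimately show ?thesis by (simp add: insert_commute)
qed

lemma pp_definable_restrict_offset:
  assumes "fo_expansion \<Gamma>" "pp_definable \<Gamma> n R" "p < n" "q < n"
  shows "pp_definable \<Gamma> n {xs \<in> R. xs ! q = xs ! p + c}"
proof -
  obtain \<phi> where \<phi>: "pp_wf \<Gamma> \<phi>" "pp_fv \<phi> \<subseteq> {..<n}" "R = {xs. length xs = n \<and> pp_sat \<phi> (asg xs)}"
    using assms(2) unfolding pp_definable_def by blast
  obtain \<psi> where \<psi>: "pp_wf \<Gamma> \<psi>" "pp_fv \<psi> \<subseteq> {p, q}" "\<And>s. pp_sat \<psi> s = (s q = s p + c)"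
    using pp_defines_offset[OF assms(1), of p q c] unfolding pp_defines_def by blast
  have "{xs \<in> R. xs ! q = xs ! p + c} = {xs. length xs = n \<and> pp_sat (PAnd \<phi> \<psi>) (asg xs)}"
    using \<phi>(3) \<psi>(3) assms(3,4) by (auto simp: asg_def)
  moreover have "pp_fv (PAnd \<phi> \<psi>) \<subseteq> {..<n}" using \<phi>(2) \<psi>(2) assms(3,4) by auto
  ultimately show ?thesis unfolding pp_definable_def using \<phi>(1) \<psi>(1)
    by (intro exI[of _ "PAnd \<phi> \<psi>"]) auto
qed

definition move_to_last :: "nat \<Rightarrow> nat \<Rightarrow> nat \<Rightarrow> nat" where
  "move_to_last n k i = (if i < k then i else if i = k then n - 1 else if i < n then i - 1 else i)"

lemma inj_move_to_last: "k < n \<Longrightarrow> inj (move_to_last n k)"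
  unfolding inj_def move_to_last_def by auto

lemma asg_remove_nth_move_to_last:
  assumes "length xs = n" "k < n" "i < n"
  shows "((asg (remove_nth k xs))(n - 1 := xs ! k)) (move_to_last n k i) = xs ! i"
proof -
  consider "i < k" | "i = k" | j where "i = Suc j" "k \<le> j"
    by (metis less_Suc_eq_le linorder_neqE_nat not0_implies_Suc not_less_zero)
  then show ?thesis
  proof cases
    case 1
    then show ?thesis using assms by (auto simp: move_to_last_def asg_def nth_remove_nth)
  next
    case 2
    then show ?thesis by (simp add: move_to_last_def)
  next
    case 3
    then show ?thesis
      using assms nth_remove_nth[of k xs j] by (auto simp: move_to_last_def asg_def)
  qed
qed

text \<open>Projecting out coordinate k: rename k to the fresh last variable n - 1 and quantify it.\<close>

lemma pp_definable_remove_nth: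
  assumes "pp_definable \<Gamma> n R" "k < n"
  shows "pp_definable \<Gamma> (n - 1) (remove_nth k ` R)"
proof -
  obtain \<phi> where \<phi>: "pp_wf \<Gamma> \<phi>" "pp_fv \<phi> \<subseteq> {..<n}" "R = {xs. length xs = n \<and> pp_sat \<phi> (asg xs)}"
    using assms(1) unfolding pp_definable_def by blast
  let ?f = "move_to_last n k"
  define \<psi> where "\<psi> = PEx (n - 1) (pp_rename ?f \<phi>)"
  have inj: "inj ?f" using inj_move_to_last assms(2) .
  have sat\<phi>: "pp_sat \<phi> (asg xs) = pp_sat \<phi> ((asg (remove_nth k xs))(n - 1 := xs ! k) \<circ> ?f)"
    if "length xs = n" for xs
  proof (intro pp_sat_cong ballI)
    fix x assume "x \<in> pp_fv \<phi>"
    then have "x < n" using \<phi>(2) by auto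
    then show "asg xs x = ((asg (remove_nth k xs))(n - 1 := xs ! k) \<circ> ?f) x"
      using asg_remove_nth_move_to_last[OF that assms(2)] that by (simp add: asg_def)
  qed
  have sat\<psi>: "pp_sat \<psi> s = (\<exists>w. pp_sat \<phi> (s(n - 1 := w) \<circ> ?f))" for s
    unfolding \<psi>_def by (simp add: pp_sat_rename[OF inj])
  have "remove_nth k ` R = {ys. length ys = n - 1 \<and> pp_sat \<psi> (asg ys)}"
  proof (intro set_eqI iffI)
    fix ys assume "ys \<in> remove_nth k ` R"
    then obtain xs where "xs \<in> R" "ys = remove_nth k xs" by blast
    then show "ys \<in> {ys. length ys = n - 1 \<and> pp_sat \<psi> (asg ys)}"
      using \<phi>(3) sat\<phi>[of xs] assms(2) sat\<psi> by auto
  next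
    fix ys assume "ys \<in> {ys. length ys = n - 1 \<and> pp_sat \<psi> (asg ys)}"
    then obtain w where ys: "length ys = n - 1" "pp_sat \<phi> ((asg ys)(n - 1 := w) \<circ> ?f)"
      using sat\<psi> by auto
    let ?xs = "insert_nth k w ys"
    have xs: "length ?xs = n" "remove_nth k ?xs = ys" "?xs ! k = w"
      using length_insert_nth[of k w ys] remove_nth_insert_nth[of k ys w] nth_insert_nth[of k ys w]
        assms(2) ys(1) by auto
    then have "?xs \<in> R" using \<phi>(3) sat\<phi>[of ?xs] ys(2) by simp
    then show "ys \<in> remove_nth k ` R" using xs(2) by force
  qed
  moreover have "pp_fv \<psi> \<subseteq> {..<n - 1}"
    using \<phi>(2) assms(2) by (auto simp: \<psi>_def pp_fv_rename[OF inj] move_to_last_def)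
  moreover have "pp_wf \<Gamma> \<psi>" using \<phi>(1) by (simp add: \<psi>_def)
  ultimately show ?thesis unfolding pp_definable_def by blast
qed

section \<open>Horn-definable relations are the local line-closed ones\<close>

definition line_closed :: "int list set \<Rightarrow> bool" where
  "line_closed R \<longleftrightarrow> (\<forall>a\<in>R. \<forall>b\<in>R. \<exists>K0. \<forall>K\<ge>K0. line_point a b K \<in> R)"

text \<open>An atom (p, i, j) stands for the equation x_j - x_i = p.\<close>

definition diff_atoms :: "int \<Rightarrow> nat \<Rightarrow> (int \<times> nat \<times> nat) set" where
  "diff_atoms B n = {(p, i, j). \<bar>p\<bar> \<le> B \<and> i < n \<and> j < n}"

definition small_diffs :: "int \<Rightarrow> nat \<Rightarrow> int list \<Rightarrow> (int \<times> nat \<times> nat) set" where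
  "small_diffs B n t = {(p, i, j) \<in> diff_atoms B n. t ! j - t ! i = p}"

lemma finite_diff_atoms: "finite (diff_atoms B n)"
proof -
  have "diff_atoms B n \<subseteq> {-B..B} \<times> {..<n} \<times> {..<n}" unfolding diff_atoms_def by auto
  then show ?thesis by (rule finite_subset) auto
qed

lemma small_diffs_subset: "small_diffs B n t \<subseteq> diff_atoms B n"
  unfolding small_diffs_def by auto

lemma lit_sat_small_diffs:
  assumes "length v = n" "\<alpha> \<in> diff_atoms B n"
  shows "lit_sat (\<beta>, \<alpha>) (asg v) \<longleftrightarrow> (\<alpha> \<in> small_diffs B n v) = \<beta>"
  using assms by (auto simp: lit_sat_def asg_def suc_pow_def small_diffs_def diff_atoms_def)

lemma small_diffs_line_point:
  assumes "length a = n" "length b = n" "B + 2 * abs_sum a + 1 \<le> K"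
  shows "small_diffs B n (line_point a b K) = small_diffs B n a \<inter> small_diffs B n b"
proof (intro set_eqI)
  fix \<alpha> :: "int \<times> nat \<times> nat"
  obtain p i j where \<alpha>: "\<alpha> = (p, i, j)" by (cases \<alpha>)
  have e: "(p, i, j) \<in> small_diffs B n v \<longleftrightarrow> \<bar>p\<bar> \<le> B \<and> i < n \<and> j < n \<and> v ! j - v ! i = p" for v
    unfolding small_diffs_def diff_atoms_def by simp
  show "\<alpha> \<in> small_diffs B n (line_point a b K) \<longleftrightarrow> \<alpha> \<in> small_diffs B n a \<inter> small_diffs B n b"
    unfolding \<alpha> Int_iff e using line_point_diff_eq_iff[of a b i j p B K] assms by auto
qed

lemma tuple_equiv_if_small_diffs_eq:
  assumes "length c = n" "length t = n" "small_diffs B n c = small_diffs B n t"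
  shows "tuple_equiv B c t"
  unfolding tuple_equiv_def
proof (intro conjI allI impI)
  fix i j assume ij: "i < length c" "j < length c"
  have "(d, i, j) \<in> small_diffs B n c \<longleftrightarrow> c ! j - c ! i = d" if "\<bar>d\<bar> \<le> B" for d
    using ij that assms(1) unfolding small_diffs_def diff_atoms_def by auto
  moreover have "(d, i, j) \<in> small_diffs B n t \<longleftrightarrow> t ! j - t ! i = d" if "\<bar>d\<bar> \<le> B" for d
    using ij that assms(1,2) unfolding small_diffs_def diff_atoms_def by auto
  ultimately show "c ! j - c ! i = t ! j - t ! i \<or> B < \<bar>c ! j - c ! i\<bar> \<and> B < \<bar>t ! j - t ! i\<bar>"
    using assms(3) by (metis linorder_not_less)
qed (use assms in simp)

lemma horn_definable_line_closed:
  assumes "horn_definable n R"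
  shows "line_closed R"
proof -
  obtain cls where cls: "\<forall>c \<in> set cls. horn_clause c \<and> (\<forall>(b, p, x, y) \<in> set c. x < n \<and> y < n)"
    and R: "R = {xs. length xs = n \<and> (\<forall>c \<in> set cls. \<exists>l \<in> set c. lit_sat l (asg xs))}"
    using assms unfolding horn_definable_def by blast
  define B where "B = Max (insert 0 ((\<lambda>l. \<bar>fst (snd l)\<bar>) ` set (concat cls)))"
  have atom: "snd l \<in> diff_atoms B n" if "c \<in> set cls" "l \<in> set c" for c l
  proof -
    have "\<bar>fst (snd l)\<bar> \<le> B" unfolding B_def using that by (intro Max_ge) auto
    then show ?thesis using cls that unfolding diff_atoms_def by (cases l) auto
  qed
  show ?thesis unfolding line_closed_def
  proof (intro ballI exI allI impI)
    fix a b K assume a: "a \<in> R" and b: "b \<in> R" and K: "B + 2 * abs_sum a + 1 \<le> K"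
    let ?z = "line_point a b K"
    have len: "length a = n" "length b = n" "length ?z = n" using a b R by auto
    have Sz: "small_diffs B n ?z = small_diffs B n a \<inter> small_diffs B n b"
      using small_diffs_line_point len K by blast
    have sat: "lit_sat l (asg v) \<longleftrightarrow> (snd l \<in> small_diffs B n v) = fst l"
      if "c \<in> set cls" "l \<in> set c" "length v = n" for c l v
      using lit_sat_small_diffs[OF that(3) atom[OF that(1,2)], of "fst l"] by simp
    have "\<exists>l\<in>set c. lit_sat l (asg ?z)" if c: "c \<in> set cls" for c
    proof -
      obtain la lb where la: "la \<in> set c" "lit_sat la (asg a)"
        and lb: "lb \<in> set c" "lit_sat lb (asg b)"
        using a b R c by blast
      consider "\<not> fst la" | "\<not> fst lb" | "fst la" "fst lb" by blast
      then show ?thesis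
      proof cases
        case 1
        then have "lit_sat la (asg ?z)"
          using sat[OF c la(1) len(3)] sat[OF c la(1) len(1)] la(2) Sz by auto
        then show ?thesis using la(1) by blast
      next
        case 2
        then have "lit_sat lb (asg ?z)"
          using sat[OF c lb(1) len(3)] sat[OF c lb(1) len(2)] lb(2) Sz by auto
        then show ?thesis using lb(1) by blast
      next
        case 3
        have "length (filter fst c) \<le> 1" using cls c unfolding horn_clause_def by blast
        moreover have "la \<in> set (filter fst c)" "lb \<in> set (filter fst c)" using la lb 3 by auto
        ultimately have "la = lb" by (cases "filter fst c") auto
        then have "lit_sat la (asg ?z)"
          using sat[OF c la(1) len(3)] sat[OF c la(1) len(1)] sat[OF c la(1) len(2)] la(2) lb(2) Sz 3
          by auto
        then show ?thesis using la(1) by blast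
      qed
    qed
    then show "?z \<in> R" using R len by auto
  qed
qed

lemma line_closed_shrink_small_diffs:
  assumes "line_closed R" "\<forall>x\<in>R. length x = n" "finite F"
    and "r0 \<in> R" "small_diffs B n t \<subseteq> small_diffs B n r0"
    and "\<forall>\<alpha>\<in>F. \<exists>r\<in>R. small_diffs B n t \<subseteq> small_diffs B n r \<and> \<alpha> \<notin> small_diffs B n r"
  shows "\<exists>c\<in>R. small_diffs B n t \<subseteq> small_diffs B n c \<and> small_diffs B n c \<inter> F = {}"
  using assms(3,6)
proof (induction F rule: finite_induct)
  case empty
  then show ?case using assms(4,5) by blast
next
  case (insert \<alpha> F)
  then obtain c where c: "c \<in> R" "small_diffs B n t \<subseteq> small_diffs B n c" "small_diffs B n c \<inter> F = {}"
    by blast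
  obtain r where r: "r \<in> R" "small_diffs B n t \<subseteq> small_diffs B n r" "\<alpha> \<notin> small_diffs B n r"
    using insert.prems by blast
  obtain K0 where K0: "\<forall>K\<ge>K0. line_point c r K \<in> R"
    using assms(1) c(1) r(1) unfolding line_closed_def by blast
  define K where "K = max K0 (B + 2 * abs_sum c + 1)"
  have "small_diffs B n (line_point c r K) = small_diffs B n c \<inter> small_diffs B n r"
    using small_diffs_line_point assms(2) c(1) r(1) K_def by simp
  then show ?case using c r K0 K_def by (intro bexI[of _ "line_point c r K"]) auto
qed

definition forced_atoms :: "int list set \<Rightarrow> int \<Rightarrow> nat \<Rightarrow> int list \<Rightarrow> (int \<times> nat \<times> nat) set" where
  "forced_atoms R B n t = {\<alpha> \<in> diff_atoms B n - small_diffs B n t.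
     \<forall>r\<in>R. small_diffs B n t \<subseteq> small_diffs B n r \<longrightarrow> \<alpha> \<in> small_diffs B n r}"

text \<open>The Horn clause excluding t: some small difference of t fails, or an atom holding in every
  member of R above t holds.\<close>

definition excluding_clause :: "int list set \<Rightarrow> int \<Rightarrow> nat \<Rightarrow> int list \<Rightarrow> literal set" where
  "excluding_clause R B n t = Pair False ` small_diffs B n t \<union>
     Pair True ` (if forced_atoms R B n t = {} then {} else {SOME \<alpha>. \<alpha> \<in> forced_atoms R B n t})"

lemma excluding_clause_subset: "excluding_clause R B n t \<subseteq> UNIV \<times> diff_atoms B n"
proof -
  have "forced_atoms R B n t \<subseteq> diff_atoms B n" unfolding forced_atoms_def by blast
  then show ?thesis
    using small_diffs_subset[of B n t] some_in_eq[of "forced_atoms R B n t"]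
    unfolding excluding_clause_def by auto
qed

lemma excluding_clause_horn:
  fixes R :: "int list set" and B :: int and n :: nat and t :: "int list"
  defines "C \<equiv> excluding_clause R B n t"
  shows "finite C \<and> (\<forall>l\<in>C. \<forall>l'\<in>C. fst l \<and> fst l' \<longrightarrow> l = l') \<and>
    (\<forall>(b, p, x, y)\<in>C. x < n \<and> y < n)"
proof (intro conjI)
  have sub: "C \<subseteq> UNIV \<times> diff_atoms B n" unfolding C_def by (rule excluding_clause_subset)
  have "finite (UNIV \<times> diff_atoms B n :: literal set)" by (simp add: finite_diff_atoms)
  with sub show "finite C" by (rule finite_subset)
  show "\<forall>l\<in>C. \<forall>l'\<in>C. fst l \<and> fst l' \<longrightarrow> l = l'"
    unfolding C_def excluding_clause_def by (auto split: if_splits)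
  show "\<forall>(b, p, x, y)\<in>C. x < n \<and> y < n" using sub by (fastforce simp: diff_atoms_def)
qed

lemma excluding_clause_excludes:
  assumes "length t = n" "l \<in> excluding_clause R B n t"
  shows "\<not> lit_sat l (asg t)"
proof -
  obtain \<beta> \<alpha> where l: "l = (\<beta>, \<alpha>)" "\<alpha> \<in> diff_atoms B n" using assms(2) excluding_clause_subset by blast
  have "(\<alpha> \<in> small_diffs B n t) \<noteq> \<beta>"
    using assms(2) some_in_eq[of "forced_atoms R B n t"]
    unfolding l excluding_clause_def forced_atoms_def by (auto split: if_splits)
  then show ?thesis using lit_sat_small_diffs[OF assms(1) l(2)] l(1) by simp
qed

text \<open>If no atom is forced, shrinking along lines of R reaches a member with the small differences
  of t, and locality puts t into R.\<close>

lemma excluding_clause_holds: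
  assumes "line_closed R" "\<forall>x\<in>R. length x = n"
    and local: "\<forall>xs ys. xs \<in> R \<longrightarrow> tuple_equiv B xs ys \<longrightarrow> ys \<in> R"
    and "xs \<in> R" "length t = n" "t \<notin> R"
  shows "\<exists>l\<in>excluding_clause R B n t. lit_sat l (asg xs)"
proof -
  let ?S = "small_diffs B n"
  have lxs: "length xs = n" using assms(2,4) by blast
  have sat: "lit_sat (\<beta>, \<alpha>) (asg xs) \<longleftrightarrow> (\<alpha> \<in> ?S xs) = \<beta>" if "\<alpha> \<in> diff_atoms B n" for \<beta> \<alpha>
    using lit_sat_small_diffs[OF lxs that] .
  consider \<alpha> where "\<alpha> \<in> ?S t" "\<alpha> \<notin> ?S xs" | "?S t \<subseteq> ?S xs" "forced_atoms R B n t \<noteq> {}"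
    | "?S t \<subseteq> ?S xs" "forced_atoms R B n t = {}" by blast
  then show ?thesis
  proof cases
    case 1
    then have "lit_sat (False, \<alpha>) (asg xs)" using sat small_diffs_subset by blast
    moreover have "(False, \<alpha>) \<in> excluding_clause R B n t"
      using 1(1) unfolding excluding_clause_def by blast
    ultimately show ?thesis by blast
  next
    case 2
    define \<alpha> where "\<alpha> = (SOME \<alpha>. \<alpha> \<in> forced_atoms R B n t)"
    have "\<alpha> \<in> forced_atoms R B n t" using 2(2) some_in_eq unfolding \<alpha>_def by blast
    then have "\<alpha> \<in> diff_atoms B n" "\<alpha> \<in> ?S xs" using 2(1) assms(4) unfolding forced_atoms_def by auto
    then have "lit_sat (True, \<alpha>) (asg xs)" using sat by blast
    moreover have "(True, \<alpha>) \<in> excluding_clause R B n t"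
      using 2(2) unfolding excluding_clause_def \<alpha>_def by simp
    ultimately show ?thesis by blast
  next
    case 3
    have "\<forall>\<alpha>\<in>diff_atoms B n - ?S t. \<exists>r\<in>R. ?S t \<subseteq> ?S r \<and> \<alpha> \<notin> ?S r"
    proof
      fix \<alpha> assume \<alpha>: "\<alpha> \<in> diff_atoms B n - ?S t"
      have "\<alpha> \<notin> forced_atoms R B n t" using 3(2) by blast
      then show "\<exists>r\<in>R. ?S t \<subseteq> ?S r \<and> \<alpha> \<notin> ?S r" using \<alpha> unfolding forced_atoms_def by blast
    qed
    from line_closed_shrink_small_diffs[OF assms(1,2) finite_Diff[OF finite_diff_atoms] assms(4) 3(1) this]
    obtain c where "c \<in> R" "?S t \<subseteq> ?S c" "?S c \<inter> (diff_atoms B n - ?S t) = {}" by blast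
    then have "c \<in> R" "?S c = ?S t" using small_diffs_subset[of B n c] by auto
    then have "t \<in> R" using local tuple_equiv_if_small_diffs_eq assms(2,5) by blast
    then show ?thesis using assms(6) by blast
  qed
qed

lemma horn_definable_of_clauses:
  assumes "finite CL"
    and "\<forall>C\<in>CL. finite C \<and> (\<forall>l\<in>C. \<forall>l'\<in>C. fst l \<and> fst l' \<longrightarrow> l = l') \<and>
      (\<forall>(b, p, x, y)\<in>C. x < n \<and> y < n)"
    and "R = {xs. length xs = n \<and> (\<forall>C\<in>CL. \<exists>l\<in>C. lit_sat l (asg xs))}"
  shows "horn_definable n R"
proof -
  obtain L where L: "set L = CL" using finite_list assms(1) by blast
  define list_of where "list_of C = (SOME c. set c = C \<and> distinct c)" for C :: "literal set"
  have list_of: "set (list_of C) = C" "distinct (list_of C)" if "C \<in> CL" for C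
    using someI_ex[OF finite_distinct_list] assms(2) that unfolding list_of_def by blast+
  have "horn_clause (list_of C)" if C: "C \<in> CL" for C
  proof -
    have "card (set (filter fst (list_of C))) \<le> Suc 0"
      using assms(2) C list_of[OF C] by (subst card_le_Suc0_iff_eq) auto
    moreover have "distinct (filter fst (list_of C))" using list_of(2)[OF C] by simp
    ultimately show ?thesis unfolding horn_clause_def by (metis One_nat_def distinct_card)
  qed
  then show ?thesis unfolding horn_definable_def
    using assms(2,3) L list_of by (intro exI[of _ "map list_of L"]) auto
qed

lemma horn_definable_if_diff_local_line_closed:
  assumes "diff_local n R" "line_closed R"
  shows "horn_definable n R"
proof -
  obtain B where local: "\<forall>xs ys. xs \<in> R \<longrightarrow> tuple_equiv B xs ys \<longrightarrow> ys \<in> R"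
    using assms(1) unfolding diff_local_def by blast
  have len: "\<forall>x\<in>R. length x = n" using assms(1) unfolding diff_local_def by blast
  let ?CL = "excluding_clause R B n ` {t. length t = n \<and> t \<notin> R}"
  have "?CL \<subseteq> Pow (UNIV \<times> diff_atoms B n)" using excluding_clause_subset by blast
  moreover have "finite (Pow (UNIV \<times> diff_atoms B n :: literal set))" by (simp add: finite_diff_atoms)
  ultimately have "finite ?CL" by (rule finite_subset)
  moreover have "\<forall>C\<in>?CL. finite C \<and> (\<forall>l\<in>C. \<forall>l'\<in>C. fst l \<and> fst l' \<longrightarrow> l = l') \<and>
      (\<forall>(b, p, x, y)\<in>C. x < n \<and> y < n)"
  proof
    fix C assume "C \<in> ?CL"
    then obtain t where "C = excluding_clause R B n t" by (rule imageE)
    then show "finite C \<and> (\<forall>l\<in>C. \<forall>l'\<in>C. fst l \<and> fst l' \<longrightarrow> l = l') \<and>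
      (\<forall>(b, p, x, y)\<in>C. x < n \<and> y < n)" using excluding_clause_horn[of R B n t] by blast
  qed
  moreover have "R = {xs. length xs = n \<and> (\<forall>C\<in>?CL. \<exists>l\<in>C. lit_sat l (asg xs))}"
  proof (rule set_eqI, unfold mem_Collect_eq, intro iffI conjI ballI)
    fix xs C assume xs: "xs \<in> R" and "C \<in> ?CL"
    from \<open>C \<in> ?CL\<close> obtain t where t: "t \<in> {t. length t = n \<and> t \<notin> R}" and C: "C = excluding_clause R B n t"
      by (rule imageE)
    show "\<exists>l\<in>C. lit_sat l (asg xs)"
      unfolding C using t by (intro excluding_clause_holds[OF assms(2) len local xs]) simp_all
  next
    fix xs assume "xs \<in> R"
    then show "length xs = n" using len by blast
  next
    fix xs assume xs: "length xs = n \<and> (\<forall>C\<in>?CL. \<exists>l\<in>C. lit_sat l (asg xs))"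
    show "xs \<in> R"
    proof (rule ccontr)
      assume "xs \<notin> R"
      with xs have "xs \<in> {t. length t = n \<and> t \<notin> R}" by simp
      then have "excluding_clause R B n xs \<in> ?CL" by (rule imageI)
      from bspec[OF conjunct2[OF xs] this]
      obtain l where "l \<in> excluding_clause R B n xs" "lit_sat l (asg xs)" ..
      then show False using excluding_clause_excludes[OF conjunct1[OF xs]] by blast
    qed
  qed
  ultimately show ?thesis by (rule horn_definable_of_clauses)
qed

section \<open>A minimal non-Horn relation is binary\<close>

text \<open>Fixing x_q - x_p = c and projecting out x_q lowers the arity while keeping the line.\<close>

lemma line_eventually_mem_if_common_diff:
  assumes FE: "fo_expansion \<Gamma>" and R: "pp_definable \<Gamma> n R"
    and horn: "\<forall>R'. pp_definable \<Gamma> (n - 1) R' \<longrightarrow> horn_definable (n - 1) R'"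
    and pq: "p < n" "q < n" "p \<noteq> q" and ab: "a \<in> R" "b \<in> R"
    and c: "a ! q = a ! p + c" "b ! q = b ! p + c"
  shows "\<exists>K0. \<forall>K\<ge>K0. line_point a b K \<in> R"
proof -
  let ?Rc = "{xs \<in> R. xs ! q = xs ! p + c}"
  have "pp_definable \<Gamma> n ?Rc" using pp_definable_restrict_offset[OF FE R pq(1,2)] .
  then have "pp_definable \<Gamma> (n - 1) (remove_nth q ` ?Rc)" using pq(2) by (rule pp_definable_remove_nth)
  then have "line_closed (remove_nth q ` ?Rc)" using horn horn_definable_line_closed by blast
  moreover have "remove_nth q a \<in> remove_nth q ` ?Rc" "remove_nth q b \<in> remove_nth q ` ?Rc"
    using ab c by auto
  ultimately obtain K0 where
    K0: "\<forall>K\<ge>K0. line_point (remove_nth q a) (remove_nth q b) K \<in> remove_nth q ` ?Rc"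
    unfolding line_closed_def by blast
  have la: "length a = n" "length b = n" using ab R pp_definable_length by blast+
  have "line_point a b K \<in> R" if "K0 \<le> K" for K
  proof -
    let ?z = "line_point a b K"
    have "remove_nth q ?z \<in> remove_nth q ` ?Rc"
      using K0 that remove_nth_line_point[of a b q K] la pq(2) by simp
    then obtain xs where xs: "xs \<in> R" "xs ! q = xs ! p + c" "remove_nth q xs = remove_nth q ?z"
      by auto
    have lxs: "length xs = n" using xs(1) R pp_definable_length by blast
    have "xs ! p = ?z ! p" using nth_eq_if_remove_nth_eq[of xs ?z q p] xs(3) lxs la pq by simp
    then have "xs ! q = ?z ! q" using xs(2) c la pq by (simp add: algebra_simps)
    then have "xs = ?z" using remove_nth_inject[of xs ?z q] xs(3) lxs la pq by simp
    then show ?thesis using xs(1) by simp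
  qed
  then show ?thesis by blast
qed

lemma tuple_equiv_list_update_far:
  assumes "k < length f" "\<forall>x<length f. x \<noteq> k \<longrightarrow> B < \<bar>f ! k - f ! x\<bar> \<and> B < \<bar>v - f ! x\<bar>"
  shows "tuple_equiv B f (f[k := v])"
  unfolding tuple_equiv_def
proof (intro conjI allI impI)
  fix x y assume xy: "x < length f" "y < length f"
  show "f ! y - f ! x = f[k := v] ! y - f[k := v] ! x \<or>
    B < \<bar>f ! y - f ! x\<bar> \<and> B < \<bar>f[k := v] ! y - f[k := v] ! x\<bar>"
    using assms xy by (cases "x = k"; cases "y = k") (auto simp: abs_minus_commute)
qed simp

lemma far_except_close_pair:
  fixes xs :: "int list"
  assumes far: "\<forall>i<n. \<forall>i'<n. i \<noteq> i' \<longrightarrow> i \<noteq> k \<longrightarrow> i' \<noteq> k \<longrightarrow> S + B < \<bar>xs ! i' - xs ! i\<bar>"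
    and j: "j < n" "j \<noteq> k" "\<bar>xs ! k - xs ! j\<bar> \<le> B" and "0 \<le> B"
  shows "\<forall>i<n. \<forall>i'<n. i \<noteq> i' \<longrightarrow> {i, i'} \<noteq> {k, j} \<longrightarrow> S < \<bar>xs ! i' - xs ! i\<bar>"
proof (intro allI impI)
  fix i i' assume ii: "i < n" "i' < n" "i \<noteq> i'" "{i, i'} \<noteq> {k, j}"
  consider "i = k" | "i' = k" | "i \<noteq> k" "i' \<noteq> k" by blast
  then show "S < \<bar>xs ! i' - xs ! i\<bar>"
  proof cases
    case 1
    then have "i' \<noteq> j" using ii(4) by auto
    then have "S + B < \<bar>xs ! i' - xs ! j\<bar>" using far[rule_format, of j i'] j ii 1 by simp
    then show ?thesis
      using 1 j(3) abs_triangle_ineq[of "xs ! i' - xs ! k" "xs ! k - xs ! j"] by simp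
  next
    case 2
    then have "i \<noteq> j" using ii(4) by auto
    then have "S + B < \<bar>xs ! j - xs ! i\<bar>" using far[rule_format, of i j] j ii 2 by simp
    then show ?thesis
      using 2 j(3) abs_triangle_ineq[of "xs ! j - xs ! i" "xs ! k - xs ! j"] by simp
  next
    case 3
    then show ?thesis using far ii \<open>0 \<le> B\<close> by force
  qed
qed

lemma line_point_spread:
  fixes e g :: "int list"
  assumes "length e = n" "length g = n" "0 \<le> B" "B \<le> S"
    and e_far: "\<forall>i<n. \<forall>i'<n. i \<noteq> i' \<longrightarrow> {i, i'} \<noteq> {k, j} \<longrightarrow> S < \<bar>e ! i' - e ! i\<bar>"
    and "g ! k - e ! k \<noteq> g ! j - e ! j" and K: "B + 2 * abs_sum e + 1 \<le> K"
  shows "\<forall>x<n. \<forall>y<n. x \<noteq> y \<longrightarrow> B < \<bar>line_point e g K ! y - line_point e g K ! x\<bar>"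
proof (intro allI impI)
  fix x y assume xy: "x < n" "y < n" "x \<noteq> y"
  show "B < \<bar>line_point e g K ! y - line_point e g K ! x\<bar>"
  proof (cases "g ! x - e ! x = g ! y - e ! y")
    case False
    have "0 \<le> K" using K assms(3) abs_sum_nonneg[of e] by linarith
    then have "K - 2 * abs_sum e \<le> \<bar>line_point e g K ! y - line_point e g K ! x\<bar>"
      using line_point_diff_far[of e g x y K] False xy assms(1,2) by simp
    then show ?thesis using K by linarith
  next
    case True
    then have "{x, y} \<noteq> {k, j}" using assms(6) by (auto simp: doubleton_eq_iff)
    then have "S < \<bar>e ! y - e ! x\<bar>" using e_far xy by blast
    moreover have "line_point e g K ! y - line_point e g K ! x = e ! y - e ! x"
      using line_point_diff[of x e y g K] True xy assms(1) by simp
    ultimately show ?thesis using assms(4) by linarith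
  qed
qed

context
  fixes R :: "int list set" and n :: nat and B :: int and a b :: "int list"
  assumes local: "\<forall>xs ys. xs \<in> R \<longrightarrow> tuple_equiv B xs ys \<longrightarrow> ys \<in> R" and B_nonneg: "0 \<le> B"
    and len: "\<forall>x\<in>R. length x = n" and ab: "a \<in> R" "b \<in> R"
    and escapes: "\<forall>K0. \<exists>K\<ge>K0. line_point a b K \<notin> R"
    and direction_inj: "\<forall>i<n. \<forall>j<n. i \<noteq> j \<longrightarrow> b ! i - a ! i \<noteq> b ! j - a ! j"
begin

lemma line_point_far_on_every_pair:
  assumes "i < n" "j < n" "i \<noteq> j" "0 \<le> K"
  shows "K - 2 * abs_sum a \<le> \<bar>line_point a b K ! j - line_point a b K ! i\<bar>"
  using line_point_diff_far[of a b i j K] assms ab len direction_inj by auto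

lemma spread_tuple_not_mem:
  assumes "length xs = n" "\<forall>i<n. \<forall>j<n. i \<noteq> j \<longrightarrow> B < \<bar>xs ! j - xs ! i\<bar>"
  shows "xs \<notin> R"
proof
  assume "xs \<in> R"
  obtain K where K: "B + 2 * abs_sum a + 1 \<le> K" "line_point a b K \<notin> R" using escapes by blast
  have "tuple_equiv B xs (line_point a b K)"
    unfolding tuple_equiv_def
  proof (intro conjI allI impI)
    show "length xs = length (line_point a b K)" using assms(1) ab len by simp
    fix i j assume ij: "i < length xs" "j < length xs"
    show "xs ! j - xs ! i = line_point a b K ! j - line_point a b K ! i \<or>
      B < \<bar>xs ! j - xs ! i\<bar> \<and> B < \<bar>line_point a b K ! j - line_point a b K ! i\<bar>"
    proof (cases "i = j")
      case False
      have "0 \<le> K" using K(1) B_nonneg abs_sum_nonneg[of a] by linarith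
      then have "K - 2 * abs_sum a \<le> \<bar>line_point a b K ! j - line_point a b K ! i\<bar>"
        using line_point_far_on_every_pair ij assms(1) False by simp
      then show ?thesis using assms ij False K(1) by auto
    qed simp
  qed
  then show False using local \<open>xs \<in> R\<close> K(2) by blast
qed

text \<open>Far out on the line, the projection away from k provides a member of R whose entries off k
  are spread; as no spread tuple lies in R, k must be close to some j, and to nothing else.\<close>

lemma exists_single_close_pair:
  assumes proj: "line_closed (remove_nth k ` R)" and "k < n" "0 \<le> S"
  obtains e j where "e \<in> R" "j < n" "j \<noteq> k" "\<bar>e ! k - e ! j\<bar> \<le> B"
    and "\<forall>i<n. \<forall>i'<n. i \<noteq> i' \<longrightarrow> {i, i'} \<noteq> {k, j} \<longrightarrow> S < \<bar>e ! i' - e ! i\<bar>"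
proof -
  have la: "length a = n" "length b = n" using ab len by auto
  obtain K0 where K0: "\<forall>K\<ge>K0. line_point (remove_nth k a) (remove_nth k b) K \<in> remove_nth k ` R"
    using proj ab unfolding line_closed_def by blast
  define K where "K = max K0 (S + B + 2 * abs_sum a + 1)"
  let ?z = "line_point a b K"
  obtain xs where xs: "xs \<in> R" "remove_nth k xs = remove_nth k ?z"
  proof -
    have "remove_nth k ?z \<in> remove_nth k ` R"
      using K0 remove_nth_line_point[of a b k K] la assms(2) unfolding K_def by simp
    then show ?thesis using that by auto
  qed
  have lxs: "length xs = n" using xs(1) len by blast
  have far: "\<forall>i<n. \<forall>i'<n. i \<noteq> i' \<longrightarrow> i \<noteq> k \<longrightarrow> i' \<noteq> k \<longrightarrow> S + B < \<bar>xs ! i' - xs ! i\<bar>"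
  proof (intro allI impI)
    fix i i' assume ii: "i < n" "i' < n" "i \<noteq> i'" "i \<noteq> k" "i' \<noteq> k"
    have "xs ! i = ?z ! i" "xs ! i' = ?z ! i'"
      using nth_eq_if_remove_nth_eq[of xs ?z k] xs(2) lxs la assms(2) ii by auto
    moreover have "0 \<le> K" unfolding K_def using assms(3) B_nonneg abs_sum_nonneg[of a] by linarith
    then have "K - 2 * abs_sum a \<le> \<bar>?z ! i' - ?z ! i\<bar>"
      using line_point_far_on_every_pair ii by blast
    ultimately show "S + B < \<bar>xs ! i' - xs ! i\<bar>" unfolding K_def by linarith
  qed
  obtain i i' where ii: "i < n" "i' < n" "i \<noteq> i'" "\<bar>xs ! i' - xs ! i\<bar> \<le> B"
    using spread_tuple_not_mem[OF lxs] xs(1) by force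
  obtain j where j: "j < n" "j \<noteq> k" "\<bar>xs ! k - xs ! j\<bar> \<le> B"
  proof (cases "i = k")
    case True
    then show ?thesis using that[of i'] ii by (simp add: abs_minus_commute)
  next
    case False
    then have "i' = k" using far ii assms(3) by force
    then show ?thesis using that[of i] ii False by simp
  qed
  show ?thesis using that[OF xs(1) j] far_except_close_pair[OF far j B_nonneg] by blast
qed

text \<open>Take f \<in> R whose only close pair is {0, i0}, a coordinate k outside it, and e \<in> R whose
  only close pair {k, j} is at distance S from the rest. Moving f_k so that f_k - f_p = e_k - e_p
  for some p \<in> {0, i0} - {j} keeps f in R, and the line from e to the moved f stays in R; but its
  far points are spread.\<close>

lemma arity_less_3:
  assumes proj: "\<forall>k<n. line_closed (remove_nth k ` R)"
    and common: "\<And>a' b' p q c. a' \<in> R \<Longrightarrow> b' \<in> R \<Longrightarrow> p < n \<Longrightarrow> q < n \<Longrightarrow> p \<noteq> q \<Longrightarrow>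
      a' ! q = a' ! p + c \<Longrightarrow> b' ! q = b' ! p + c \<Longrightarrow> \<exists>K0. \<forall>K\<ge>K0. line_point a' b' K \<in> R"
  shows "n < 3"
proof (rule ccontr)
  assume "\<not> n < 3"
  obtain f i0 where f: "f \<in> R" "i0 < n" "i0 \<noteq> 0"
    and f_far: "\<forall>i<n. \<forall>i'<n. i \<noteq> i' \<longrightarrow> {i, i'} \<noteq> {0, i0} \<longrightarrow> B < \<bar>f ! i' - f ! i\<bar>"
    using exists_single_close_pair[of 0 B] proj \<open>\<not> n < 3\<close> B_nonneg by (metis not_gr0 zero_less_numeral)
  have lf: "length f = n" using f(1) len by blast
  define k where "k = (if i0 = 1 then 2 else 1 :: nat)"
  have k: "k < n" "k \<noteq> 0" "k \<noteq> i0" using \<open>\<not> n < 3\<close> unfolding k_def by auto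
  define W where "W = abs_sum f"
  have W: "\<bar>f ! y - f ! x\<bar> \<le> 2 * W" if "x < n" "y < n" for x y
    using abs_diff_le_abs_sum[of x f y] that lf unfolding W_def by simp
  define S where "S = 2 * W + B + 1"
  have "0 \<le> S" using abs_sum_nonneg[of f] B_nonneg unfolding S_def W_def by simp
  then obtain e j where e: "e \<in> R" "j < n" "j \<noteq> k" "\<bar>e ! k - e ! j\<bar> \<le> B"
    and e_far: "\<forall>i<n. \<forall>i'<n. i \<noteq> i' \<longrightarrow> {i, i'} \<noteq> {k, j} \<longrightarrow> S < \<bar>e ! i' - e ! i\<bar>"
    using exists_single_close_pair[of k S] proj k(1) by metis
  have le: "length e = n" using e(1) len by blast
  define p where "p = (if j = 0 then i0 else 0)"
  have p: "p < n" "p \<noteq> j" "p \<noteq> k" using f(2,3) k \<open>\<not> n < 3\<close> unfolding p_def by auto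
  have e_kp: "S < \<bar>e ! k - e ! p\<bar>" and e_jp: "S < \<bar>e ! j - e ! p\<bar>"
    using e_far p k e(2,3) by (metis doubleton_eq_iff)+
  define f' where "f' = f[k := f ! p + (e ! k - e ! p)]"
  have lf': "length f' = n" using lf unfolding f'_def by simp
  have f'_k: "f' ! k = f' ! p + (e ! k - e ! p)" and f'_other: "\<And>x. x \<noteq> k \<Longrightarrow> f' ! x = f ! x"
    using lf k p unfolding f'_def by simp_all
  have "tuple_equiv B f f'"
    unfolding f'_def
  proof (rule tuple_equiv_list_update_far)
    show "\<forall>x<length f. x \<noteq> k \<longrightarrow> B < \<bar>f ! k - f ! x\<bar> \<and> B < \<bar>f ! p + (e ! k - e ! p) - f ! x\<bar>"
    proof (intro allI impI conjI)
      fix x assume x: "x < length f" "x \<noteq> k"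
      have "{x, k} \<noteq> {0, i0}" using k by (metis doubleton_eq_iff)
      then show "B < \<bar>f ! k - f ! x\<bar>" using f_far x k lf by metis
      show "B < \<bar>f ! p + (e ! k - e ! p) - f ! x\<bar>" using W[of x p] x lf p e_kp unfolding S_def by linarith
    qed
  qed (use k lf in simp)
  then have "f' \<in> R" using local f(1) by blast
  then obtain K0 where K0: "\<forall>K\<ge>K0. line_point e f' K \<in> R"
    using common[OF e(1) _ p(1) k(1) p(3), of f' "e ! k - e ! p"] f'_k by auto
  define K where "K = max K0 (B + 2 * abs_sum e + 1)"
  have "f' ! k - e ! k \<noteq> f' ! j - e ! j"
  proof
    assume "f' ! k - e ! k = f' ! j - e ! j"
    then have "e ! j - e ! p = f ! j - f ! p" using f'_k f'_other[OF e(3)] f'_other[OF p(3)] by simp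
    then show False using e_jp W[OF p(1) e(2)] B_nonneg unfolding S_def by linarith
  qed
  moreover have "B \<le> S" using abs_sum_nonneg[of f] unfolding S_def W_def by linarith
  ultimately have "\<forall>x<n. \<forall>y<n. x \<noteq> y \<longrightarrow> B < \<bar>line_point e f' K ! y - line_point e f' K ! x\<bar>"
    using line_point_spread[OF le lf' B_nonneg _ e_far] unfolding K_def by simp
  moreover have "line_point e f' K \<in> R" using K0 unfolding K_def by simp
  ultimately show False using spread_tuple_not_mem le by simp
qed

end

lemma minimal_non_horn_arity:
  assumes FE: "fo_expansion \<Gamma>" and R: "pp_definable \<Gamma> n R" and non_horn: "\<not> horn_definable n R"
    and minimal: "\<forall>m<n. \<forall>R'. pp_definable \<Gamma> m R' \<longrightarrow> horn_definable m R'"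
  shows "n = 2"
proof -
  have "diff_local n R" using pp_definable_diff_local[OF FE R] .
  then obtain B where B: "0 \<le> B" "\<forall>xs ys. xs \<in> R \<longrightarrow> tuple_equiv B xs ys \<longrightarrow> ys \<in> R"
    and len: "\<forall>x\<in>R. length x = n"
    unfolding diff_local_def by blast
  have "\<not> line_closed R"
    using horn_definable_if_diff_local_line_closed \<open>diff_local n R\<close> non_horn by blast
  then obtain a b where ab: "a \<in> R" "b \<in> R" and escapes: "\<forall>K0. \<exists>K\<ge>K0. line_point a b K \<notin> R"
    unfolding line_closed_def by blast
  have "n \<noteq> 0"
    using ab escapes len by (metis length_0_conv line_point_def list.map(1) upt_0)
  have "n \<noteq> 1"
  proof
    assume "n = 1"
    then have "tuple_equiv B a (line_point a b K)" for K
      using ab len unfolding tuple_equiv_def by auto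
    then show False using B(2) ab escapes by blast
  qed
  have horn: "\<forall>R'. pp_definable \<Gamma> (n - 1) R' \<longrightarrow> horn_definable (n - 1) R'"
    using minimal \<open>n \<noteq> 0\<close> by simp
  note common = line_eventually_mem_if_common_diff[OF FE R horn]
  have "b ! i - a ! i \<noteq> b ! j - a ! j" if "i < n" "j < n" "i \<noteq> j" for i j
    using common[OF that(1,2,3) ab, of "a ! j - a ! i"] escapes by force
  moreover have "line_closed (remove_nth k ` R)" if "k < n" for k
    using pp_definable_remove_nth[OF R that] horn horn_definable_line_closed by blast
  ultimately have "n < 3"
    using arity_less_3[OF B(2,1) len ab escapes] common by blast
  then show "n = 2" using \<open>n \<noteq> 0\<close> \<open>n \<noteq> 1\<close> by linarith
qed

theorem mainTheorem17:
  fixes \<Gamma> :: zstructure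
  assumes "fo_expansion \<Gamma>"
    and "\<exists>n R. pp_definable \<Gamma> n R \<and> \<not> horn_definable n R"
  shows "\<exists>R. pp_definable \<Gamma> 2 R \<and> \<not> horn_definable 2 R"
proof -
  let ?non_horn = "\<lambda>n. \<exists>R. pp_definable \<Gamma> n R \<and> \<not> horn_definable n R"
  obtain n where n: "?non_horn n" and minimal: "\<forall>m<n. \<not> ?non_horn m"
    using assms(2) exists_least_iff[of ?non_horn] by blast
  then obtain R where R: "pp_definable \<Gamma> n R" "\<not> horn_definable n R" by blast
  have "n = 2" using minimal_non_horn_arity[OF assms(1) R] minimal by blast
  then show ?thesis using R by blast
qed

end
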